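(* Let $(\Sigma_+,\Sigma_-,N_1,N_2,N_3)$ be a solution of the Wainwright–Hsu system satisfying the constraint, with $N_1<0$ and $N_2,N_3>0$. Then $\lim_{\tau\to\infty}N_1(\tau)=0$ and $\lim_{\tau\to\infty}N_2(\tau)=\lim_{\tau\to\infty}N_3(\tau)=\infty$.
   Context: Wainwright–Hsu system: for functions $N_1,N_2,N_3,\Sigma_+,\Sigma_-$ of $\tau\in\mathbb{R}$ (prime denotes $d/d\tau$), $N_1'=(q-4\Sigma_+)N_1$, $N_2'=(q+2\Sigma_++2\sqrt3\Sigma_-)N_2$, $N_3'=(q+2\Sigma_+-2\sqrt3\Sigma_-)N_3$, $\Sigma_+'=-(2-q)\Sigma_+-3S_+$, $\Sigma_-'=-(2-q)\Sigma_--3S_-$, where $q=2(\Sigma_+^2+\Sigma_-^2)$, $S_+=\frac12[(N_2-N_3)^2-N_1(2N_1-N_2-N_3)]$, $S_-=\frac{\sqrt3}{2}(N_3-N_2)(N_1-N_2-N_3)$, together with the constraint $\Sigma_+^2+\Sigma_-^2+\frac34[N_1^2+N_2^2+N_3^2-2(N_1N_2+N_2N_3+N_1N_3)]=1$. Solutions with these sign conditions exist for all $\tau\in\mathbb{R}$ and the signs are preserved. *)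

theory Defs
  imports "HOL-Analysis.Analysis"
begin

definition WH_q :: "real \<Rightarrow> real \<Rightarrow> real" where
  "WH_q sp sm = 2 * (sp^2 + sm^2)"

definition WH_Sp :: "real \<Rightarrow> real \<Rightarrow> real \<Rightarrow> real" where
  "WH_Sp n1 n2 n3 = (1/2) * ((n2 - n3)^2 - n1 * (2*n1 - n2 - n3))"

definition WH_Sm :: "real \<Rightarrow> real \<Rightarrow> real \<Rightarrow> real" where
  "WH_Sm n1 n2 n3 = (sqrt 3 / 2) * (n3 - n2) * (n1 - n2 - n3)"

definition WH_solution ::
  "(real \<Rightarrow> real) \<Rightarrow> (real \<Rightarrow> real) \<Rightarrow> (real \<Rightarrow> real) \<Rightarrow> (real \<Rightarrow> real) \<Rightarrow> (real \<Rightarrow> real) \<Rightarrow> bool"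
where
  "WH_solution N1 N2 N3 Sp Sm \<longleftrightarrow>
    (\<forall>t. (N1 has_real_derivative ((WH_q (Sp t) (Sm t) - 4 * Sp t) * N1 t)) (at t)
       \<and> (N2 has_real_derivative ((WH_q (Sp t) (Sm t) + 2 * Sp t + 2 * sqrt 3 * Sm t) * N2 t)) (at t)
       \<and> (N3 has_real_derivative ((WH_q (Sp t) (Sm t) + 2 * Sp t - 2 * sqrt 3 * Sm t) * N3 t)) (at t)
       \<and> (Sp has_real_derivative (- (2 - WH_q (Sp t) (Sm t)) * Sp t - 3 * WH_Sp (N1 t) (N2 t) (N3 t))) (at t)
       \<and> (Sm has_real_derivative (- (2 - WH_q (Sp t) (Sm t)) * Sm t - 3 * WH_Sm (N1 t) (N2 t) (N3 t))) (at t)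
       \<and> (Sp t)^2 + (Sm t)^2 + (3/4) * ((N1 t)^2 + (N2 t)^2 + (N3 t)^2
            - 2 * (N1 t * N2 t + N2 t * N3 t + N1 t * N3 t)) = 1)"

end

theory Submission
  imports Defs "HOL-Real_Asymp.Real_Asymp"
begin

text \<open>With \<open>u = (N\<^sub>2 - N\<^sub>3)/(N\<^sub>2 + N\<^sub>3)\<close>, the function
  \<open>W = \<Sigma>\<^sub>+ - (2/\<surd>3) u \<Sigma>\<^sub>- + 2 ln (-N\<^sub>1 N\<^sub>2 N\<^sub>3)\<close> grows at rate at least 1/2
  along every solution with \<open>N\<^sub>1 < 0 < N\<^sub>2, N\<^sub>3\<close>: the logarithm contributes \<open>6q\<close>, and the
  constraint controls the remaining terms. The first two summands of \<open>W\<close> are bounded, so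
  \<open>-N\<^sub>1 N\<^sub>2 N\<^sub>3\<close> grows exponentially. The constraint also bounds \<open>-N\<^sub>1 (N\<^sub>2 + N\<^sub>3)\<close>
  by 2/3, which forces \<open>N\<^sub>2, N\<^sub>3 \<rightarrow> \<infinity>\<close> and then \<open>N\<^sub>1 \<rightarrow> 0\<close>.\<close>

definition imbalance :: "real \<Rightarrow> real \<Rightarrow> real" where
  "imbalance y z = (y - z) / (y + z)"

lemma abs_imbalance_le_1:
  fixes y z :: real
  assumes "0 \<le> y" and "0 \<le> z"
  shows "\<bar>imbalance y z\<bar> \<le> 1"
  using assms by (cases "y + z = 0") (simp_all add: imbalance_def abs_divide divide_le_eq)

lemma DERIV_ln_proportional:
  assumes "(f has_real_derivative c * f t) (at t)" and "0 < f t"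
  shows "((\<lambda>s. ln (f s)) has_real_derivative c) (at t)"
  by (rule DERIV_cong[OF DERIV_chain2[OF DERIV_ln_divide assms(1)]]) (use assms(2) in simp_all)

lemma DERIV_imbalance_proportional:
  assumes "(f has_real_derivative \<alpha> * f t) (at t)" and "(g has_real_derivative \<beta> * g t) (at t)"
    and "f t + g t \<noteq> 0"
  shows "((\<lambda>s. imbalance (f s) (g s)) has_real_derivative
           (\<alpha> - \<beta>) / 2 * (1 - (imbalance (f t) (g t))\<^sup>2)) (at t)"
  unfolding imbalance_def
  by (rule DERIV_cong[OF DERIV_quotient[OF DERIV_diff[OF assms(1,2)] DERIV_add[OF assms(1,2)] assms(3)]])
     (use assms(3) in \<open>simp add: divide_simps, algebra\<close>)

lemma DERIV_ge_imp_linear_growth: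
  fixes f f' :: "real \<Rightarrow> real"
  assumes "\<And>t. (f has_real_derivative f' t) (at t)" and "\<And>t. k \<le> f' t" and "a \<le> b"
  shows "f a + k * (b - a) \<le> f b"
proof -
  have "f a - k * a \<le> f b - k * b"
  proof (rule DERIV_nonneg_imp_nondecreasing[OF \<open>a \<le> b\<close>, of "\<lambda>t. f t - k * t", simplified])
    fix t
    have "((\<lambda>t. f t - k * t) has_real_derivative f' t - k) (at t)"
      using assms(1) by (auto intro!: derivative_eq_intros)
    then show "\<exists>y. ((\<lambda>t. f t - k * t) has_real_derivative y) (at t) \<and> 0 \<le> y"
      using assms(2)[of t] by force
  qed
  then show ?thesis by (simp add: algebra_simps)
qed

lemma abs_diff_scaled_le:
  fixes a b c u :: real
  assumes "\<bar>u\<bar> \<le> 1" and "0 \<le> c"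
  shows "\<bar>a - c * u * b\<bar> \<le> \<bar>a\<bar> + c * \<bar>b\<bar>"
proof -
  have "\<bar>c * u * b\<bar> \<le> c * \<bar>b\<bar>"
    using assms by (simp add: abs_mult mult.assoc mult_left_le_one_le mult_left_mono)
  then show ?thesis using abs_triangle_ineq4[of a "c * u * b"] by linarith
qed

lemma WH_constraint_bounds:
  fixes a b x y z :: real
  assumes "x < 0" and "0 < y" and "0 < z"
    and "a\<^sup>2 + b\<^sup>2 + (3/4) * (x\<^sup>2 + y\<^sup>2 + z\<^sup>2 - 2 * (x * y + y * z + x * z)) = 1"
  shows "a\<^sup>2 + b\<^sup>2 \<le> 1" and "- x * y \<le> 2/3" and "- x * z \<le> 2/3"
proof -
  have split: "4 * a\<^sup>2 + 4 * b\<^sup>2 + 3 * x\<^sup>2 + 3 * (y - z)\<^sup>2 + 6 * (- x * y) + 6 * (- x * z) = 4"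
    using assms(4) unfolding power2_eq_square by algebra
  have "0 \<le> - x * y" "0 \<le> - x * z"
    using assms(1-3) by (simp_all add: mult_le_0_iff)
  with split show "a\<^sup>2 + b\<^sup>2 \<le> 1" "- x * y \<le> 2/3" "- x * z \<le> 2/3"
    using zero_le_power2[of a] zero_le_power2[of b] zero_le_power2[of x] zero_le_power2[of "y - z"]
    by linarith+
qed

lemma WH_constraint_product_bounds:
  fixes a b x y z :: real
  assumes "x < 0" and "0 < y" and "0 < z"
    and "a\<^sup>2 + b\<^sup>2 + (3/4) * (x\<^sup>2 + y\<^sup>2 + z\<^sup>2 - 2 * (x * y + y * z + x * z)) = 1"
  shows "3/2 * (- x * y * z) \<le> y" and "3/2 * (- x * y * z) \<le> z" and "\<bar>x\<bar> \<le> 2/3 * inverse y"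
proof -
  have "(- x * z) * y \<le> 2/3 * y" and "(- x * y) * z \<le> 2/3 * z"
    using mult_right_mono[OF WH_constraint_bounds(3)[OF assms]] mult_right_mono[OF WH_constraint_bounds(2)[OF assms]]
      assms(2,3) by simp_all
  moreover have "- x * y * z = (- x * z) * y" and "- x * y * z = (- x * y) * z"
    by (simp_all add: mult_ac)
  ultimately show "3/2 * (- x * y * z) \<le> y" and "3/2 * (- x * y * z) \<le> z"
    by argo+
  show "\<bar>x\<bar> \<le> 2/3 * inverse y"
    using WH_constraint_bounds(2)[OF assms] assms(1,2) by (simp add: inverse_eq_divide le_divide_eq)
qed

lemma WH_solution_constraint:
  assumes "WH_solution N1 N2 N3 Sp Sm"
  shows "(Sp t)\<^sup>2 + (Sm t)\<^sup>2 + (3/4) * ((N1 t)\<^sup>2 + (N2 t)\<^sup>2 + (N3 t)\<^sup>2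
           - 2 * (N1 t * N2 t + N2 t * N3 t + N1 t * N3 t)) = 1"
  using assms unfolding WH_solution_def by blast

definition WH_lyapunov :: "real \<Rightarrow> real \<Rightarrow> real \<Rightarrow> real \<Rightarrow> real \<Rightarrow> real" where
  "WH_lyapunov sp sm n1 n2 n3 = sp - 2 / sqrt 3 * imbalance n2 n3 * sm + 2 * ln (- n1 * n2 * n3)"

definition WH_lyapunov_rate :: "real \<Rightarrow> real \<Rightarrow> real \<Rightarrow> real \<Rightarrow> real \<Rightarrow> real" where
  "WH_lyapunov_rate sp sm n1 n2 n3 =
     - (2 - WH_q sp sm) * (sp - 2 / sqrt 3 * imbalance n2 n3 * sm)
     - 4 * sm\<^sup>2 * (1 - (imbalance n2 n3)\<^sup>2)
     + 2 * sqrt 3 * imbalance n2 n3 * WH_Sm n1 n2 n3 - 3 * WH_Sp n1 n2 n3 + 6 * WH_q sp sm"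

lemma WH_lyapunov_rate_ge:
  fixes a b x y z :: real
  assumes "x < 0" and "0 < y" and "0 < z"
    and constraint: "a\<^sup>2 + b\<^sup>2 + (3/4) * (x\<^sup>2 + y\<^sup>2 + z\<^sup>2 - 2 * (x * y + y * z + x * z)) = 1"
  shows "1/2 \<le> WH_lyapunov_rate a b x y z"
proof -
  define u where "u = imbalance y z"
  define n where "n = y + z"
  define d where "d = y - z"
  have "0 < n" and "x * n \<le> 0"
    using assms(1-3) by (simp_all add: n_def mult_le_0_iff)
  have "a\<^sup>2 + b\<^sup>2 \<le> 1"
    using WH_constraint_bounds[OF assms] by simp
  then have q: "0 \<le> 2 - WH_q a b" "2 - WH_q a b \<le> 2"
    by (simp_all add: WH_q_def)
  have amgm: "2 * c * \<bar>r\<bar> \<le> 1/4 + 4 * c\<^sup>2 * r\<^sup>2" for c r :: real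
  proof -
    have "0 \<le> (2 * c * \<bar>r\<bar> - 1/2)\<^sup>2" by simp
    then show ?thesis by (simp add: power2_eq_square algebra_simps abs_mult_self_eq)
  qed
  have "\<bar>a - 2 / sqrt 3 * u * b\<bar> \<le> \<bar>a\<bar> + 2 / sqrt 3 * \<bar>b\<bar>"
    unfolding u_def by (rule abs_diff_scaled_le) (use assms(2,3) abs_imbalance_le_1 in auto)
  then have "\<bar>(2 - WH_q a b) * (a - 2 / sqrt 3 * u * b)\<bar> \<le> 2 * (\<bar>a\<bar> + 2 / sqrt 3 * \<bar>b\<bar>)"
    unfolding abs_mult using q by (intro mult_mono) auto
  moreover have "2 * (\<bar>a\<bar> + 2 / sqrt 3 * \<bar>b\<bar>) \<le> 1/2 + 4 * a\<^sup>2 + (16/3) * b\<^sup>2"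
    using amgm[of 1 a] amgm[of "2 / sqrt 3" b] by (simp add: power_divide)
  ultimately have damping: "- (1/2 + 4 * a\<^sup>2 + (16/3) * b\<^sup>2) \<le> - (2 - WH_q a b) * (a - 2 / sqrt 3 * u * b)"
    unfolding mult_minus_left by (meson abs_le_D1 order.trans neg_le_iff_le)
  have shear: "4 * b\<^sup>2 * (1 - u\<^sup>2) \<le> 4 * b\<^sup>2"
    by (simp add: algebra_simps)
  have "2 * sqrt 3 * u * WH_Sm x y z = 3 * d\<^sup>2 * (n - x) / n"
    using \<open>0 < n\<close> by (simp add: u_def imbalance_def WH_Sm_def n_def d_def field_simps power2_eq_square)
  moreover have "3 * d\<^sup>2 \<le> 3 * d\<^sup>2 * (n - x) / n"
    using \<open>0 < n\<close> \<open>x < 0\<close> by (simp add: le_divide_eq mult_left_mono)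
  ultimately have curvature_minus: "3 * d\<^sup>2 \<le> 2 * sqrt 3 * u * WH_Sm x y z"
    by simp
  have curvature_plus: "- 3 * WH_Sp x y z = 3 * x\<^sup>2 - (3/2) * (x * n) - (3/2) * d\<^sup>2"
    unfolding WH_Sp_def n_def d_def power2_eq_square by (simp add: field_simps)
  have "(3/4) * (x\<^sup>2 + d\<^sup>2 - 2 * (x * n)) = 1 - a\<^sup>2 - b\<^sup>2"
    using constraint unfolding n_def d_def power2_eq_square by algebra
  then show ?thesis
    unfolding WH_lyapunov_rate_def u_def[symmetric]
    using damping shear curvature_minus curvature_plus \<open>x * n \<le> 0\<close> WH_q_def[of a b]
      zero_le_power2[of a] zero_le_power2[of b] zero_le_power2[of x] zero_le_power2[of d]
    by argo
qed

lemma WH_lyapunov_has_real_derivative: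
  assumes "WH_solution N1 N2 N3 Sp Sm" and "N1 t < 0" and "0 < N2 t" and "0 < N3 t"
  shows "((\<lambda>t. WH_lyapunov (Sp t) (Sm t) (N1 t) (N2 t) (N3 t)) has_real_derivative
           WH_lyapunov_rate (Sp t) (Sm t) (N1 t) (N2 t) (N3 t)) (at t)"
proof -
  define q where "q = WH_q (Sp t) (Sm t)"
  from assms(1) have
        D1: "(N1 has_real_derivative (q - 4 * Sp t) * N1 t) (at t)"
    and D2: "(N2 has_real_derivative (q + 2 * Sp t + 2 * sqrt 3 * Sm t) * N2 t) (at t)"
    and D3: "(N3 has_real_derivative (q + 2 * Sp t - 2 * sqrt 3 * Sm t) * N3 t) (at t)"
    and DSp: "(Sp has_real_derivative - (2 - q) * Sp t - 3 * WH_Sp (N1 t) (N2 t) (N3 t)) (at t)"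
    and DSm: "(Sm has_real_derivative - (2 - q) * Sm t - 3 * WH_Sm (N1 t) (N2 t) (N3 t)) (at t)"
    unfolding WH_solution_def q_def by blast+
  have Du: "((\<lambda>s. imbalance (N2 s) (N3 s)) has_real_derivative
              2 * sqrt 3 * Sm t * (1 - (imbalance (N2 t) (N3 t))\<^sup>2)) (at t)"
    by (rule DERIV_cong[OF DERIV_imbalance_proportional[OF D2 D3]]) (use assms(3,4) in auto)
  have "((\<lambda>s. - N1 s * N2 s * N3 s) has_real_derivative 3 * q * (- N1 t * N2 t * N3 t)) (at t)"
    by (rule DERIV_cong[OF DERIV_mult[OF DERIV_mult[OF DERIV_minus[OF D1] D2] D3]]) algebra
  then have Dln: "((\<lambda>s. ln (- N1 s * N2 s * N3 s)) has_real_derivative 3 * q) (at t)"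
    by (rule DERIV_ln_proportional) (use assms(2-4) in \<open>simp add: mult_less_0_iff\<close>)
  have sqrt3_mult_sqrt3: "sqrt 3 * (sqrt 3 * x) = 3 * x" for x :: real
    by (simp add: mult.assoc[symmetric])
  show ?thesis
    unfolding WH_lyapunov_def
    by (rule DERIV_cong[OF DERIV_add[OF DERIV_diff[OF DSp DERIV_mult[OF DERIV_cmult[OF Du] DSm]]
                                        DERIV_cmult[OF Dln]]])
       (simp add: WH_lyapunov_rate_def q_def field_simps power2_eq_square sqrt3_mult_sqrt3)
qed

lemma WH_lyapunov_bounded_part:
  fixes a b y z :: real
  assumes "a\<^sup>2 + b\<^sup>2 \<le> 1" and "0 < y" and "0 < z"
  shows "\<bar>a - 2 / sqrt 3 * imbalance y z * b\<bar> \<le> 3"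
proof -
  have "a\<^sup>2 \<le> 1" "b\<^sup>2 \<le> 1"
    using assms(1) zero_le_power2[of a] zero_le_power2[of b] by linarith+
  then have "\<bar>a\<bar> \<le> 1" "\<bar>b\<bar> \<le> 1"
    by (simp_all add: abs_square_le_1)
  moreover have "2 / sqrt 3 \<le> 2"
    by (simp add: divide_le_eq)
  moreover have "\<bar>a - 2 / sqrt 3 * imbalance y z * b\<bar> \<le> \<bar>a\<bar> + 2 / sqrt 3 * \<bar>b\<bar>"
    by (rule abs_diff_scaled_le) (use assms(2,3) abs_imbalance_le_1 in auto)
  ultimately show ?thesis
    using mult_mono[of "2 / sqrt 3" 2 "\<bar>b\<bar>" 1] by simp
qed

lemma WH_product_tendsto_at_top:
  assumes sol: "WH_solution N1 N2 N3 Sp Sm"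
    and signs: "\<And>t. N1 t < 0" "\<And>t. 0 < N2 t" "\<And>t. 0 < N3 t"
  shows "filterlim (\<lambda>t. - N1 t * N2 t * N3 t) at_top at_top"
proof -
  define W where "W t = WH_lyapunov (Sp t) (Sm t) (N1 t) (N2 t) (N3 t)" for t
  define V where "V t = Sp t - 2 / sqrt 3 * imbalance (N2 t) (N3 t) * Sm t" for t
  define L where "L t = ln (- N1 t * N2 t * N3 t)" for t
  have W_split: "W t = V t + 2 * L t" for t
    unfolding W_def V_def L_def WH_lyapunov_def ..
  define c where "c = (W 0 - 3) / 2"
  note constraint = WH_solution_constraint[OF sol]
  have "exp (c + t / 4) \<le> - N1 t * N2 t * N3 t" if "0 \<le> t" for t
  proof -
    have "W 0 + 1/2 * (t - 0) \<le> W t"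
      unfolding W_def
      by (rule DERIV_ge_imp_linear_growth[OF WH_lyapunov_has_real_derivative[OF sol signs]
            WH_lyapunov_rate_ge[OF signs constraint] \<open>0 \<le> t\<close>])
    moreover have "V t \<le> 3"
      unfolding V_def using WH_lyapunov_bounded_part[OF WH_constraint_bounds(1)[OF signs constraint] signs(2,3)]
      by (rule abs_le_D1)
    ultimately have "c + t / 4 \<le> L t"
      unfolding c_def using W_split[of t] by argo
    then have "exp (c + t / 4) \<le> exp (L t)"
      by simp
    also have "exp (L t) = - N1 t * N2 t * N3 t"
      unfolding L_def using signs[of t] by (simp add: mult_less_0_iff)
    finally show ?thesis .
  qed
  moreover have "filterlim (\<lambda>t. exp (c + t / 4)) at_top at_top"
    by real_asymp
  ultimately show ?thesis
    by (rule filterlim_at_top_mono[OF _ eventually_mono[OF eventually_ge_at_top[of 0]], rotated])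
qed

theorem mainTheorem12:
  fixes N1 N2 N3 Sp Sm :: "real \<Rightarrow> real"
  assumes "WH_solution N1 N2 N3 Sp Sm"
    and "\<forall>t. N1 t < 0" and "\<forall>t. N2 t > 0" and "\<forall>t. N3 t > 0"
  shows "(N1 \<longlongrightarrow> 0) at_top \<and> filterlim N2 at_top at_top \<and> filterlim N3 at_top at_top"
proof -
  have signs: "\<And>t. N1 t < 0" "\<And>t. 0 < N2 t" "\<And>t. 0 < N3 t"
    using assms(2-4) by auto
  note bounds = WH_constraint_product_bounds[OF signs WH_solution_constraint[OF assms(1)]]
  have P: "filterlim (\<lambda>t. 3/2 * (- N1 t * N2 t * N3 t)) at_top at_top"
    by (rule filterlim_tendsto_pos_mult_at_top[OF tendsto_const _ WH_product_tendsto_at_top[OF assms(1) signs]])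
       simp
  have N2: "filterlim N2 at_top at_top"
    by (rule filterlim_at_top_mono[OF P always_eventually[OF allI[OF bounds(1)]]])
  have N3: "filterlim N3 at_top at_top"
    by (rule filterlim_at_top_mono[OF P always_eventually[OF allI[OF bounds(2)]]])
  have inverse_N2: "((\<lambda>t. 2/3 * inverse (N2 t)) \<longlongrightarrow> 0) at_top"
    by (intro tendsto_mult_right_zero tendsto_inverse_0_at_top N2)
  have "(N1 \<longlongrightarrow> 0) at_top"
    by (rule Lim_null_comparison[OF always_eventually[OF allI] inverse_N2]) (use bounds(3) in simp)
  with N2 N3 show ?thesis by blast
qed

end
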